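(* Let $\gamma>1$, $\varepsilon>0$, $L>0$, $T>0$, $\Omega=(-L,L)$, and let $F_1,F_2,G_1,G_2$ be feasible growth functions. Let $n^{(1)}_{\gamma,\mathrm{init}},n^{(2)}_{\gamma,\mathrm{init}}\ge0$ be initial data supported in $\Omega$ and let $(n_{\gamma,\varepsilon}^{(1)},n_{\gamma,\varepsilon}^{(2)})$ solve the regularised problem on $Q_T=\Omega\times(0,T)$ (see context), with $n_{\gamma,\varepsilon}=n_{\gamma,\varepsilon}^{(1)}+n_{\gamma,\varepsilon}^{(2)}$. Let $R_\infty>0$ be an $L^\infty$ bound for $|R_{\gamma,\varepsilon}|$, where $R_{\gamma,\varepsilon}=c^{(1)}_{\gamma,\varepsilon}F(p_{\gamma,\varepsilon})+c^{(2)}_{\gamma,\varepsilon}G(p_{\gamma,\varepsilon})$. Then for $t\in(0,T]$, \[ n_{\gamma,\varepsilon}(t,x)\ \ge\ \underline n_\gamma(t):=2\varepsilon e^{-R_\infty t}>0 . \]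
   Context: Feasible growth functions: $F_1,F_2,G_1,G_2:[0,\infty)\to\mathbb{R}$ are $C^1$ with bounded derivatives; for all $p\ge0$, $F_1'(p)<0$, $G_2'(p)<0$, $F_2'(p)\le 0$, $G_1'(p)\le 0$; there exists $P_H>0$ such that for all $p\ge P_H$: $F_1(p)\le0$, $G_2(p)\le 0$, $F_2(p)=G_1(p)=0$; and $F(0)=G(0)$ with $F:=F_1+F_2$, $G:=G_1+G_2$. Regularised problem: $n^{(i)}_{\gamma,\varepsilon}$ solve on $Q_T$ $\partial_t n^{(1)}_{\gamma,\varepsilon}=\partial_x(n^{(1)}_{\gamma,\varepsilon}\partial_xp_{\gamma,\varepsilon})+n^{(1)}_{\gamma,\varepsilon}F_1(p_{\gamma,\varepsilon})+n^{(2)}_{\gamma,\varepsilon}G_1(p_{\gamma,\varepsilon})$, $\partial_t n^{(2)}_{\gamma,\varepsilon}=\partial_x(n^{(2)}_{\gamma,\varepsilon}\partial_xp_{\gamma,\varepsilon})+n^{(1)}_{\gamma,\varepsilon}F_2(p_{\gamma,\varepsilon})+n^{(2)}_{\gamma,\varepsilon}G_2(p_{\gamma,\varepsilon})$, with $p_{\gamma,\varepsilon}=n_{\gamma,\varepsilon}^\gamma$, initial data $n^{(i)}_{\gamma,\varepsilon}(0)=n^{(i)}_{\gamma,\mathrm{init}}+\varepsilon$, and homogeneous Neumann boundary conditions $\partial_x n_{\gamma,\varepsilon}(t,\pm L)=0$; the total density satisfies (in the strong sense) $\partial_t n_{\gamma,\varepsilon}-\frac{\gamma}{\gamma+1}\partial_x^2(n_{\gamma,\varepsilon}^{\gamma+1})=n_{\gamma,\varepsilon}R_{\gamma,\varepsilon}$.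 The fractions are $c^{(i)}_{\gamma,\varepsilon}=n^{(i)}_{\gamma,\varepsilon}/n_{\gamma,\varepsilon}$. *)

theory Defs
  imports "HOL-Analysis.Analysis"
begin

definition C1_bdd_deriv :: "(real \<Rightarrow> real) \<Rightarrow> (real \<Rightarrow> real) \<Rightarrow> bool" where
  "C1_bdd_deriv f f' \<longleftrightarrow>
     (\<forall>p\<ge>0. (f has_real_derivative f' p) (at p within {0..})) \<and>
     continuous_on {0..} f' \<and> bounded (f' ` {0..})"

text \<open>Feasible growth functions (F = F1+F2, G = G1+G2).\<close>
definition feasible_growth ::
  "(real \<Rightarrow> real) \<Rightarrow> (real \<Rightarrow> real) \<Rightarrow> (real \<Rightarrow> real) \<Rightarrow> (real \<Rightarrow> real) \<Rightarrow> bool" where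
  "feasible_growth F1 F2 G1 G2 \<longleftrightarrow>
     (\<exists>F1' F2' G1' G2'.
        C1_bdd_deriv F1 F1' \<and> C1_bdd_deriv F2 F2' \<and> C1_bdd_deriv G1 G1' \<and> C1_bdd_deriv G2 G2' \<and>
        (\<forall>p\<ge>0. F1' p < 0 \<and> G2' p < 0 \<and> F2' p \<le> 0 \<and> G1' p \<le> 0)) \<and>
     (\<exists>PH>0. \<forall>p\<ge>PH. F1 p \<le> 0 \<and> G2 p \<le> 0 \<and> F2 p = 0 \<and> G1 p = 0) \<and>
     F1 0 + F2 0 = G1 0 + G2 0"

definition tot_density :: "(real \<Rightarrow> real \<Rightarrow> real) \<Rightarrow> (real \<Rightarrow> real \<Rightarrow> real) \<Rightarrow> real \<Rightarrow> real \<Rightarrow> real" where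
  "tot_density n1 n2 t x = n1 t x + n2 t x"

definition pressure :: "real \<Rightarrow> (real \<Rightarrow> real \<Rightarrow> real) \<Rightarrow> (real \<Rightarrow> real \<Rightarrow> real) \<Rightarrow> real \<Rightarrow> real \<Rightarrow> real" where
  "pressure \<gamma> n1 n2 t x = tot_density n1 n2 t x powr \<gamma>"

definition growth_R ::
  "real \<Rightarrow> (real \<Rightarrow> real) \<Rightarrow> (real \<Rightarrow> real) \<Rightarrow> (real \<Rightarrow> real) \<Rightarrow> (real \<Rightarrow> real) \<Rightarrow>
   (real \<Rightarrow> real \<Rightarrow> real) \<Rightarrow> (real \<Rightarrow> real \<Rightarrow> real) \<Rightarrow> real \<Rightarrow> real \<Rightarrow> real" where
  "growth_R \<gamma> F1 F2 G1 G2 n1 n2 t x =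
     (let P = pressure \<gamma> n1 n2 t x; N = tot_density n1 n2 t x in
      (n1 t x / N) * (F1 P + F2 P) + (n2 t x / N) * (G1 P + G2 P))"

definition regularised_solution ::
  "real \<Rightarrow> real \<Rightarrow> real \<Rightarrow> real \<Rightarrow>
   (real \<Rightarrow> real) \<Rightarrow> (real \<Rightarrow> real) \<Rightarrow> (real \<Rightarrow> real) \<Rightarrow> (real \<Rightarrow> real) \<Rightarrow>
   (real \<Rightarrow> real) \<Rightarrow> (real \<Rightarrow> real) \<Rightarrow>
   (real \<Rightarrow> real \<Rightarrow> real) \<Rightarrow> (real \<Rightarrow> real \<Rightarrow> real) \<Rightarrow> bool" where
  "regularised_solution \<gamma> \<epsilon> L T F1 F2 G1 G2 ni1 ni2 n1 n2 \<longleftrightarrow>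
    (let p = pressure \<gamma> n1 n2; n = tot_density n1 n2 in
     (\<forall>t\<in>{0..T}. \<forall>x\<in>{-L..L}. n1 t x \<ge> 0 \<and> n2 t x \<ge> 0) \<and>
     continuous_on ({0..T} \<times> {-L..L}) (\<lambda>(t,x). n1 t x) \<and>
     continuous_on ({0..T} \<times> {-L..L}) (\<lambda>(t,x). n2 t x) \<and>
     (\<forall>x\<in>{-L..L}. n1 0 x = ni1 x + \<epsilon> \<and> n2 0 x = ni2 x + \<epsilon>) \<and>
     (\<forall>t\<in>{0<..<T}. \<forall>x\<in>{-L..L}.
        (\<lambda>y. n1 t y) differentiable (at x within {-L..L}) \<and>
        (\<lambda>y. n2 t y) differentiable (at x within {-L..L})) \<and>
     (\<forall>t\<in>{0<..<T}.
        ((\<lambda>y. n t y) has_real_derivative 0) (at L within {-L..L}) \<and>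
        ((\<lambda>y. n t y) has_real_derivative 0) (at (-L) within {-L..L})) \<and>
     (\<forall>t\<in>{0<..<T}. \<forall>x\<in>{-L<..<L}.
        (\<lambda>y. p t y) differentiable (at x) \<and>
        (\<exists>d1 d2.
          ((\<lambda>y. n1 t y * deriv (\<lambda>z. p t z) y) has_real_derivative d1) (at x) \<and>
          ((\<lambda>y. n2 t y * deriv (\<lambda>z. p t z) y) has_real_derivative d2) (at x) \<and>
          ((\<lambda>s. n1 s x) has_real_derivative
              (d1 + n1 t x * F1 (p t x) + n2 t x * G1 (p t x))) (at t) \<and>
          ((\<lambda>s. n2 s x) has_real_derivative
              (d2 + n1 t x * F2 (p t x) + n2 t x * G2 (p t x))) (at t))))"

end

(*
  Comparison argument for the total density N = n1 + n2, which solves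
  dN/dt = d/dx (N d/dx N^gamma) + N R with Neumann data; the a.e. bound on R gives
  R >= -Rinf at every point where N > 0, because R is continuous there.
  For delta > 0 and K > 2 gamma sup N^gamma put W = exp (Rinf t) N + delta (x^2 + K t).
  If W dropped below a level c < 2 eps, let tau be the first time at which it reaches c
  and x1 a minimum point of W(tau, .). The Neumann condition keeps x1 away from -L and L,
  where the penalty delta x^2 has nonzero slope. At the interior minimum the diffusion term
  is at least -2 delta gamma N^gamma exp (-Rinf tau), hence dW/dt >= delta (K - 2 gamma N^gamma) > 0
  at (tau, x1), contradicting W > c before tau. Letting delta -> 0 and c -> 2 eps yields
  exp (Rinf t) N >= 2 eps.
*)

theory Submission
  imports Defs
begin

section \<open>Derivatives at minimum points\<close>

lemma has_real_derivative_nonpos_at_right_min: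
  fixes f :: "real \<Rightarrow> real"
  assumes der: "(f has_real_derivative D) (at b within {a..b})" and "a < b"
    and min: "\<And>y. y \<in> {a..b} \<Longrightarrow> f b \<le> f y"
  shows "D \<le> 0"
proof (rule ccontr)
  assume "\<not> D \<le> 0"
  then obtain d where "d > 0" and d: "\<And>h. h > 0 \<Longrightarrow> b - h \<in> {a..b} \<Longrightarrow> h < d \<Longrightarrow> f (b - h) < f b"
    using has_real_derivative_pos_inc_left[OF der] by force
  define h where "h = min (d / 2) (b - a)"
  have "f (b - h) < f b"
    using d \<open>d > 0\<close> \<open>a < b\<close> by (auto simp: h_def)
  moreover have "f b \<le> f (b - h)"
    using min \<open>d > 0\<close> \<open>a < b\<close> by (auto simp: h_def)
  ultimately show False
    by simp
qed

lemma has_real_derivative_nonneg_at_left_min: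
  fixes f :: "real \<Rightarrow> real"
  assumes der: "(f has_real_derivative D) (at a within {a..b})" and "a < b"
    and min: "\<And>y. y \<in> {a..b} \<Longrightarrow> f a \<le> f y"
  shows "D \<ge> 0"
proof (rule ccontr)
  assume "\<not> D \<ge> 0"
  then obtain d where "d > 0" and d: "\<And>h. h > 0 \<Longrightarrow> a + h \<in> {a..b} \<Longrightarrow> h < d \<Longrightarrow> f (a + h) < f a"
    using has_real_derivative_neg_dec_right[OF der] by force
  define h where "h = min (d / 2) (b - a)"
  have "f (a + h) < f a"
    using d \<open>d > 0\<close> \<open>a < b\<close> by (auto simp: h_def)
  moreover have "f a \<le> f (a + h)"
    using min \<open>d > 0\<close> \<open>a < b\<close> by (auto simp: h_def)
  ultimately show False
    by simp
qed

lemma has_real_derivative_zero_at_min: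
  fixes f :: "real \<Rightarrow> real"
  assumes "(f has_real_derivative D) (at x)" "open U" "x \<in> U" and min: "\<And>y. y \<in> U \<Longrightarrow> f x \<le> f y"
  shows "D = 0"
proof -
  have "(*) D = (\<lambda>h. 0)"
    using assms(1) min unfolding has_field_derivative_def
    by (intro differential_zero_maxmin[where f = f, OF \<open>x \<in> U\<close> \<open>open U\<close>]) auto
  then show ?thesis
    by (metis mult.right_neutral)
qed

lemma has_real_derivative_nonneg_at_min_of_scaled_derivative:
  fixes \<phi> \<phi>' g \<psi> :: "real \<Rightarrow> real"
  assumes "open U" "x \<in> U"
    and \<phi>: "\<And>y. y \<in> U \<Longrightarrow> (\<phi> has_real_derivative \<phi>' y) (at y)"
    and min: "\<And>y. y \<in> U \<Longrightarrow> \<phi> x \<le> \<phi> y"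
    and g: "\<And>y. y \<in> U \<Longrightarrow> g y > 0"
    and \<psi>_eq: "\<And>y. y \<in> U \<Longrightarrow> \<psi> y = g y * \<phi>' y"
    and \<psi>: "(\<psi> has_real_derivative D) (at x)"
  shows "D \<ge> 0"
proof (rule ccontr)
  assume "\<not> D \<ge> 0"
  obtain r where "r > 0" and r: "ball x r \<subseteq> U"
    using \<open>open U\<close> \<open>x \<in> U\<close> openE by blast
  have "\<phi>' x = 0"
    using has_real_derivative_zero_at_min[OF \<phi> \<open>open U\<close>] \<open>x \<in> U\<close> min by blast
  then have "\<psi> x = 0"
    using \<psi>_eq \<open>x \<in> U\<close> by simp
  then obtain d where "d > 0" and d: "\<And>h. h > 0 \<Longrightarrow> h < d \<Longrightarrow> \<psi> (x + h) < 0"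
    using DERIV_neg_dec_right[OF \<psi>] \<open>\<not> D \<ge> 0\<close> by force
  define h where "h = min (d / 2) (r / 2)"
  have in_U: "x + s \<in> U" if "0 \<le> s" "s \<le> h" for s
    using that r \<open>r > 0\<close> by (auto simp: h_def dist_real_def subset_iff)
  have "h > 0" "h < d"
    using \<open>d > 0\<close> \<open>r > 0\<close> by (auto simp: h_def)
  have "(\<phi> has_real_derivative \<phi>' y) (at y)" if "x \<le> y" "y \<le> x + h" for y
    using \<phi> in_U[of "y - x"] that by simp
  then obtain z where z: "x < z" "z < x + h" and mvt: "\<phi> (x + h) - \<phi> x = h * \<phi>' z"
    using MVT2[of x "x + h" \<phi> \<phi>'] \<open>h > 0\<close> by auto
  have "\<phi>' z < 0"
  proof -
    have "z \<in> U" and "\<psi> z < 0"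
      using in_U[of "z - x"] d[of "z - x"] z \<open>h < d\<close> by auto
    then show ?thesis
      using \<psi>_eq g by (fastforce simp: mult_less_0_iff)
  qed
  then have "\<phi> (x + h) < \<phi> x"
    using mvt mult_pos_neg[OF \<open>h > 0\<close>, of "\<phi>' z"] by linarith
  then show False
    using min[OF in_U[of h]] \<open>d > 0\<close> \<open>r > 0\<close> by (simp add: h_def)
qed

lemma powr_derivative_and_flux_eq:
  fixes n :: "real \<Rightarrow> real"
  assumes "(n has_real_derivative n') (at y)" "n y > 0"
  shows "((\<lambda>z. n z powr \<gamma>) has_real_derivative \<gamma> * n y powr (\<gamma> - 1) * n') (at y)"
    and "n y * deriv (\<lambda>z. n z powr \<gamma>) y = \<gamma> * n y powr \<gamma> * n'"
proof -
  show dp: "((\<lambda>z. n z powr \<gamma>) has_real_derivative \<gamma> * n y powr (\<gamma> - 1) * n') (at y)"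
    using DERIV_fun_powr[OF assms(1), of \<gamma>] \<open>n y > 0\<close> by simp
  show "n y * deriv (\<lambda>z. n z powr \<gamma>) y = \<gamma> * n y powr \<gamma> * n'"
    using DERIV_imp_deriv[OF dp] \<open>n y > 0\<close> by (simp add: powr_mult_base algebra_simps)
qed

lemma has_real_derivative_mult_nonpos_at_penalised_min:
  fixes n :: "real \<Rightarrow> real"
  assumes "(n has_real_derivative n') (at x)" "a > 0" "\<delta> \<ge> 0" "open U" "x \<in> U"
    and min: "\<And>y. y \<in> U \<Longrightarrow> a * n x + \<delta> * x\<^sup>2 \<le> a * n y + \<delta> * y\<^sup>2"
  shows "n' * x \<le> 0"
proof -
  have "((\<lambda>y. a * n y + \<delta> * y\<^sup>2) has_real_derivative a * n' + 2 * \<delta> * x) (at x)"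
    by (rule derivative_eq_intros assms(1) refl)+ simp
  then have "a * n' + 2 * \<delta> * x = 0"
    using has_real_derivative_zero_at_min \<open>open U\<close> \<open>x \<in> U\<close> min by blast
  then have "a * (n' * x) = - (2 * \<delta> * x\<^sup>2)"
    unfolding power2_eq_square by algebra
  then have "a * (n' * x) \<le> 0"
    using \<open>\<delta> \<ge> 0\<close> by simp
  then show ?thesis
    using \<open>a > 0\<close> by (simp add: mult_le_0_iff)
qed

lemma flux_derivative_lower_bound_at_min:
  fixes n :: "real \<Rightarrow> real"
  assumes "\<gamma> > 0" "a > 0" "\<delta> \<ge> 0" "open U" "x \<in> U"
    and pos: "\<And>y. y \<in> U \<Longrightarrow> n y > 0"
    and diff: "\<And>y. y \<in> U \<Longrightarrow> n differentiable (at y)"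
    and min: "\<And>y. y \<in> U \<Longrightarrow> a * n x + \<delta> * x\<^sup>2 \<le> a * n y + \<delta> * y\<^sup>2"
    and flux: "((\<lambda>y. n y * deriv (\<lambda>z. n z powr \<gamma>) y) has_real_derivative d) (at x)"
  shows "a * d \<ge> - 2 * \<delta> * \<gamma> * n x powr \<gamma>"
proof -
  define n' where "n' = deriv n"
  have dn: "(n has_real_derivative n' y) (at y)" if "y \<in> U" for y
    using diff[OF that] unfolding n'_def by (simp add: DERIV_deriv_iff_real_differentiable)
  have dp: "((\<lambda>z. n z powr \<gamma>) has_real_derivative \<gamma> * n y powr (\<gamma> - 1) * n' y) (at y)"
    and flux_eq: "n y * deriv (\<lambda>z. n z powr \<gamma>) y = \<gamma> * n y powr \<gamma> * n' y" if "y \<in> U" for y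
    using powr_derivative_and_flux_eq[OF dn[OF that] pos[OF that]] by blast+
  define \<phi>' where "\<phi>' y = a * n' y + 2 * \<delta> * y" for y
  have d\<phi>: "((\<lambda>y. a * n y + \<delta> * y\<^sup>2) has_real_derivative \<phi>' y) (at y)" if "y \<in> U" for y
    unfolding \<phi>'_def by (rule derivative_eq_intros dn[OF that] refl)+ simp
  have "n' x * x \<le> 0"
    using has_real_derivative_mult_nonpos_at_penalised_min[OF dn[OF \<open>x \<in> U\<close>]] assms(2-5) min .
  \<comment> \<open>On U the corrected flux is a positive multiple of the derivative of the penalised
      function, so its derivative at the minimum is nonnegative.\<close>
  define D where "D = d + 2 * \<delta> * \<gamma> / a * (\<gamma> * n x powr (\<gamma> - 1) * n' x * x + n x powr \<gamma>)"
  have \<psi>_deriv: "((\<lambda>y. n y * deriv (\<lambda>z. n z powr \<gamma>) y + 2 * \<delta> * \<gamma> / a * (n y powr \<gamma> * y))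
          has_real_derivative D) (at x)"
    unfolding D_def by (rule derivative_eq_intros flux dp[OF \<open>x \<in> U\<close>] refl)+ (simp add: algebra_simps)
  have \<psi>_eq: "n y * deriv (\<lambda>z. n z powr \<gamma>) y + 2 * \<delta> * \<gamma> / a * (n y powr \<gamma> * y)
      = \<gamma> * n y powr \<gamma> / a * \<phi>' y" if "y \<in> U" for y
    using flux_eq[OF that] \<open>a > 0\<close> unfolding \<phi>'_def by (simp add: field_simps)
  have g_pos: "\<gamma> * n y powr \<gamma> / a > 0" if "y \<in> U" for y
    using pos[OF that] \<open>\<gamma> > 0\<close> \<open>a > 0\<close> by simp
  have "D \<ge> 0"
    by (rule has_real_derivative_nonneg_at_min_of_scaled_derivative[where g = "\<lambda>y. \<gamma> * n y powr \<gamma> / a",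
          OF \<open>open U\<close> \<open>x \<in> U\<close> d\<phi> min g_pos \<psi>_eq \<psi>_deriv])
  moreover have "2 * \<delta> * \<gamma> * (\<gamma> * n x powr (\<gamma> - 1) * (n' x * x)) \<le> 0"
    using \<open>n' x * x \<le> 0\<close> \<open>\<delta> \<ge> 0\<close> \<open>\<gamma> > 0\<close> by (simp add: mult_nonneg_nonpos)
  moreover have "a * D = a * d + 2 * \<delta> * \<gamma> * (\<gamma> * n x powr (\<gamma> - 1) * (n' x * x)) + 2 * \<delta> * \<gamma> * n x powr \<gamma>"
    unfolding D_def using \<open>a > 0\<close> by (simp add: field_simps)
  moreover have "a * D \<ge> 0"
    using \<open>D \<ge> 0\<close> \<open>a > 0\<close> by simp
  ultimately show ?thesis
    by linarith
qed

section \<open>A comparison principle for the porous medium equation\<close>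

lemma first_sublevel_time:
  fixes W :: "real \<Rightarrow> 'a::metric_space \<Rightarrow> real"
  assumes cont: "continuous_on ({0..t} \<times> K) (\<lambda>(s, y). W s y)" and "compact K"
    and "x \<in> K" "0 \<le> t" "W t x \<le> c"
  obtains \<tau> y where "\<tau> \<in> {0..t}" "y \<in> K" "W \<tau> y \<le> c"
    "\<And>s y. s \<in> {0..<\<tau>} \<Longrightarrow> y \<in> K \<Longrightarrow> c < W s y"
proof -
  define A where "A = ({0..t} \<times> K) \<inter> (\<lambda>(s, y). W s y) -` {..c}"
  have "closed A"
    unfolding A_def using \<open>compact K\<close>
    by (intro continuous_closed_preimage[OF cont]) (auto intro: closed_Times compact_imp_closed)
  then have "compact (({0..t} \<times> K) \<inter> A)"
    using \<open>compact K\<close> by (intro compact_Int_closed compact_Times compact_Icc)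
  then have "compact A"
    by (simp add: A_def Int_absorb1)
  moreover have "(t, x) \<in> A"
    using \<open>x \<in> K\<close> \<open>0 \<le> t\<close> \<open>W t x \<le> c\<close> by (simp add: A_def)
  ultimately obtain z0 where "z0 \<in> A" and first: "\<And>z. z \<in> A \<Longrightarrow> fst z0 \<le> fst z"
    using continuous_attains_inf[of A fst] continuous_on_fst[OF continuous_on_id] by blast
  show ?thesis
  proof (rule that[of "fst z0" "snd z0"])
    show "fst z0 \<in> {0..t}" "snd z0 \<in> K" "W (fst z0) (snd z0) \<le> c"
      using \<open>z0 \<in> A\<close> by (auto simp: A_def)
    show "c < W s y" if "s \<in> {0..<fst z0}" "y \<in> K" for s y
    proof (rule ccontr)
      assume "\<not> c < W s y"
      then have "(s, y) \<in> A"
        using that \<open>z0 \<in> A\<close> by (auto simp: A_def)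
      then show False
        using first[of "(s, y)"] that by simp
    qed
  qed
qed

lemma first_hitting_time:
  fixes W :: "real \<Rightarrow> 'a::metric_space \<Rightarrow> real"
  assumes cont: "continuous_on ({0..t} \<times> K) (\<lambda>(s, y). W s y)" and "compact K"
    and "x \<in> K" "0 \<le> t" "W t x < c" and init: "\<And>y. y \<in> K \<Longrightarrow> c < W 0 y"
  obtains \<tau> x1 where "\<tau> \<in> {0<..t}" "x1 \<in> K" "W \<tau> x1 = c" "\<And>y. y \<in> K \<Longrightarrow> W \<tau> x1 \<le> W \<tau> y"
    "\<And>s y. s \<in> {0..<\<tau>} \<Longrightarrow> y \<in> K \<Longrightarrow> c < W s y"
proof -
  obtain \<tau> y0 where "\<tau> \<in> {0..t}" "y0 \<in> K" "W \<tau> y0 \<le> c"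
    and before: "\<And>s y. s \<in> {0..<\<tau>} \<Longrightarrow> y \<in> K \<Longrightarrow> c < W s y"
    using first_sublevel_time[OF cont \<open>compact K\<close> \<open>x \<in> K\<close> \<open>0 \<le> t\<close> less_imp_le[OF \<open>W t x < c\<close>]]
    by blast
  have "continuous_on K (W \<tau>)"
    using continuous_on_compose2[OF cont, of K "\<lambda>y. (\<tau>, y)"] \<open>\<tau> \<in> {0..t}\<close>
    by (auto simp: continuous_on_Pair image_subset_iff)
  then obtain x1 where "x1 \<in> K" and x1_min: "\<And>y. y \<in> K \<Longrightarrow> W \<tau> x1 \<le> W \<tau> y"
    using continuous_attains_inf[OF \<open>compact K\<close>] \<open>x \<in> K\<close> by blast
  have "W \<tau> x1 \<le> c"
    using x1_min[OF \<open>y0 \<in> K\<close>] \<open>W \<tau> y0 \<le> c\<close> by simp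
  have "\<tau> > 0"
    using init[OF \<open>x1 \<in> K\<close>] \<open>W \<tau> x1 \<le> c\<close> \<open>\<tau> \<in> {0..t}\<close> by (cases "\<tau> = 0") auto
  have "continuous_on {0..\<tau>} (\<lambda>s. W s x1)"
    using continuous_on_compose2[OF cont, of "{0..\<tau>}" "\<lambda>s. (s, x1)"] \<open>x1 \<in> K\<close> \<open>\<tau> \<in> {0..t}\<close>
    by (auto simp: continuous_on_Pair image_subset_iff)
  then have "continuous_on (closure {0..<\<tau>}) (\<lambda>s. W s x1)" and "\<tau> \<in> closure {0..<\<tau>}"
    using \<open>\<tau> > 0\<close> by simp_all
  moreover have "c \<le> W s x1" if "s \<in> {0..<\<tau>}" for s
    using before[OF that \<open>x1 \<in> K\<close>] by simp
  ultimately have "c \<le> W \<tau> x1"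
    by (rule continuous_ge_on_closure)
  then show ?thesis
    using that \<open>\<tau> > 0\<close> \<open>\<tau> \<in> {0..t}\<close> \<open>x1 \<in> K\<close> \<open>W \<tau> x1 \<le> c\<close> x1_min before by auto
qed

locale neumann_porous_medium =
  fixes \<gamma> L T Rinf :: real and N R :: "real \<Rightarrow> real \<Rightarrow> real"
  assumes gamma_pos: "\<gamma> > 0" and L_pos: "L > 0"
    and continuous: "continuous_on ({0..T} \<times> {-L..L}) (\<lambda>(t, x). N t x)"
    and nonneg: "\<And>t x. t \<in> {0..T} \<Longrightarrow> x \<in> {-L..L} \<Longrightarrow> N t x \<ge> 0"
    and neumann: "\<And>t. t \<in> {0<..<T} \<Longrightarrow>
      (N t has_real_derivative 0) (at L within {-L..L}) \<and>
      (N t has_real_derivative 0) (at (-L) within {-L..L})"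
    and differentiable: "\<And>t x. t \<in> {0<..<T} \<Longrightarrow> x \<in> {-L<..<L} \<Longrightarrow> N t differentiable (at x)"
    and equation: "\<And>t x. t \<in> {0<..<T} \<Longrightarrow> x \<in> {-L<..<L} \<Longrightarrow>
      \<exists>d. ((\<lambda>y. N t y * deriv (\<lambda>z. N t z powr \<gamma>) y) has_real_derivative d) (at x) \<and>
          ((\<lambda>s. N s x) has_real_derivative d + N t x * R t x) (at t)"
    and growth_lower_bound: "\<And>t x. t \<in> {0<..<T} \<Longrightarrow> x \<in> {-L<..<L} \<Longrightarrow> N t x > 0 \<Longrightarrow> - Rinf \<le> R t x"
begin

definition penalised_density :: "real \<Rightarrow> real \<Rightarrow> real \<Rightarrow> real \<Rightarrow> real" where
  "penalised_density \<delta> K t x = exp (Rinf * t) * N t x + \<delta> * (x\<^sup>2 + K * t)"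

lemma penalised_density_min_interior:
  assumes "t \<in> {0<..<T}" "\<delta> > 0" "x \<in> {-L..L}"
    and min: "\<And>y. y \<in> {-L..L} \<Longrightarrow> penalised_density \<delta> K t x \<le> penalised_density \<delta> K t y"
  shows "x \<in> {-L<..<L}"
proof -
  have df: "(penalised_density \<delta> K t has_real_derivative 2 * \<delta> * z) (at z within {-L..L})"
    if "z = L \<or> z = -L" for z
  proof -
    have dN: "(N t has_real_derivative 0) (at z within {-L..L})"
      using neumann[OF \<open>t \<in> {0<..<T}\<close>] that by auto
    show ?thesis
      unfolding penalised_density_def[abs_def] by (rule derivative_eq_intros dN refl)+ simp
  qed
  have "-L < L" "2 * \<delta> * L > 0"
    using L_pos \<open>\<delta> > 0\<close> by simp_all
  have "x \<noteq> L"
  proof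
    assume "x = L"
    then have "2 * \<delta> * L \<le> 0"
      using min by (intro has_real_derivative_nonpos_at_right_min[OF df \<open>-L < L\<close>]) auto
    then show False
      using \<open>2 * \<delta> * L > 0\<close> by simp
  qed
  moreover have "x \<noteq> -L"
  proof
    assume "x = -L"
    then have "0 \<le> 2 * \<delta> * -L"
      using min by (intro has_real_derivative_nonneg_at_left_min[OF df \<open>-L < L\<close>]) auto
    then show False
      using \<open>2 * \<delta> * L > 0\<close> by simp
  qed
  ultimately show ?thesis
    using \<open>x \<in> {-L..L}\<close> by auto
qed

lemma penalised_density_time_derivative_pos:
  assumes K: "\<And>t x. t \<in> {0..T} \<Longrightarrow> x \<in> {-L..L} \<Longrightarrow> 2 * \<gamma> * N t x powr \<gamma> < K"
    and "\<delta> > 0" "\<tau> \<in> {0<..<T}" "x \<in> {-L<..<L}" "N \<tau> x > 0"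
    and min: "\<And>y. y \<in> {-L..L} \<Longrightarrow> penalised_density \<delta> K \<tau> x \<le> penalised_density \<delta> K \<tau> y"
  obtains D where "D > 0" "((\<lambda>s. penalised_density \<delta> K s x) has_real_derivative D) (at \<tau>)"
proof -
  define a where "a = exp (Rinf * \<tau>)"
  obtain d where flux: "((\<lambda>y. N \<tau> y * deriv (\<lambda>z. N \<tau> z powr \<gamma>) y) has_real_derivative d) (at x)"
    and dt: "((\<lambda>s. N s x) has_real_derivative d + N \<tau> x * R \<tau> x) (at \<tau>)"
    using equation[OF \<open>\<tau> \<in> {0<..<T}\<close> \<open>x \<in> {-L<..<L}\<close>] by blast
  define U where "U = {-L<..<L} \<inter> N \<tau> -` {0<..}"
  have "continuous_on {-L<..<L} (N \<tau>)"
    using differentiable[OF \<open>\<tau> \<in> {0<..<T}\<close>]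
    by (intro continuous_at_imp_continuous_on) (auto intro: differentiable_imp_continuous_within)
  then have "open U"
    unfolding U_def by (intro continuous_open_preimage) auto
  have "a * d \<ge> - 2 * \<delta> * \<gamma> * N \<tau> x powr \<gamma>"
  proof (rule flux_derivative_lower_bound_at_min[OF gamma_pos _ _ \<open>open U\<close> _ _ _ _ flux])
    show "a * N \<tau> x + \<delta> * x\<^sup>2 \<le> a * N \<tau> y + \<delta> * y\<^sup>2" if "y \<in> U" for y
      using min[of y] that unfolding a_def penalised_density_def distrib_left by (auto simp: U_def)
  qed (use \<open>\<delta> > 0\<close> \<open>x \<in> {-L<..<L}\<close> \<open>N \<tau> x > 0\<close> differentiable[OF \<open>\<tau> \<in> {0<..<T}\<close>] in
    \<open>auto simp: a_def U_def\<close>)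
  moreover have "a * N \<tau> x * (Rinf + R \<tau> x) \<ge> 0"
    using growth_lower_bound[OF \<open>\<tau> \<in> {0<..<T}\<close> \<open>x \<in> {-L<..<L}\<close> \<open>N \<tau> x > 0\<close>] \<open>N \<tau> x > 0\<close>
    by (simp add: a_def)
  moreover have "\<delta> * (2 * \<gamma> * N \<tau> x powr \<gamma>) < \<delta> * K"
    using K[of \<tau> x] \<open>\<tau> \<in> {0<..<T}\<close> \<open>x \<in> {-L<..<L}\<close> \<open>\<delta> > 0\<close> by simp
  ultimately have "Rinf * a * N \<tau> x + a * (d + N \<tau> x * R \<tau> x) + \<delta> * K > 0"
    by (simp add: algebra_simps)
  moreover have "((\<lambda>s. penalised_density \<delta> K s x) has_real_derivative
      Rinf * a * N \<tau> x + a * (d + N \<tau> x * R \<tau> x) + \<delta> * K) (at \<tau>)"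
    unfolding a_def penalised_density_def by (rule derivative_eq_intros dt refl)+ (simp add: algebra_simps)
  ultimately show ?thesis
    using that by blast
qed

lemma penalty_le:
  assumes "0 \<le> \<delta>" "0 \<le> K" "t \<in> {0..T}" "x \<in> {-L..L}"
  shows "\<delta> * (x\<^sup>2 + K * t) \<le> \<delta> * (L\<^sup>2 + K * T)"
  using assms by (intro mult_left_mono add_mono) (auto simp: abs_le_square_iff[symmetric])

lemma density_pos_if_penalised_density_gt:
  assumes "0 \<le> \<delta>" "0 \<le> K" "t \<in> {0..T}" "x \<in> {-L..L}"
    and "\<delta> * (L\<^sup>2 + K * T) < penalised_density \<delta> K t x"
  shows "N t x > 0"
proof -
  have "exp (Rinf * t) * N t x > 0"
    using penalty_le[OF assms(1-4)] assms(5) unfolding penalised_density_def by linarith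
  then show ?thesis
    by (simp add: zero_less_mult_iff)
qed

lemma penalised_density_lower_bound:
  assumes K: "\<And>t x. t \<in> {0..T} \<Longrightarrow> x \<in> {-L..L} \<Longrightarrow> 2 * \<gamma> * N t x powr \<gamma> < K"
    and "\<delta> > 0" "\<delta> * (L\<^sup>2 + K * T) < c"
    and init: "\<And>y. y \<in> {-L..L} \<Longrightarrow> c < N 0 y"
    and "t \<in> {0..<T}" "x \<in> {-L..L}"
  shows "c \<le> penalised_density \<delta> K t x"
proof (rule ccontr)
  assume "\<not> c \<le> penalised_density \<delta> K t x"
  then have "penalised_density \<delta> K t x < c"
    by simp
  have "continuous_on ({0..t} \<times> {-L..L}) (\<lambda>(s, y). N s y)"
    using \<open>t \<in> {0..<T}\<close> by (intro continuous_on_subset[OF continuous]) auto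
  then have cont: "continuous_on ({0..t} \<times> {-L..L}) (\<lambda>(s, y). penalised_density \<delta> K s y)"
    unfolding penalised_density_def case_prod_unfold by (intro continuous_intros)
  have "c < penalised_density \<delta> K 0 y" if "y \<in> {-L..L}" for y
    using init[OF that] mult_nonneg_nonneg[of \<delta> "y\<^sup>2"] \<open>\<delta> > 0\<close>
    unfolding penalised_density_def by (simp del: mult_nonneg_nonneg)
  then obtain \<tau> x1 where "\<tau> \<in> {0<..t}" "x1 \<in> {-L..L}" "penalised_density \<delta> K \<tau> x1 = c"
    and x1_min: "\<And>y. y \<in> {-L..L} \<Longrightarrow> penalised_density \<delta> K \<tau> x1 \<le> penalised_density \<delta> K \<tau> y"
    and before: "\<And>s. s \<in> {0..<\<tau>} \<Longrightarrow> c < penalised_density \<delta> K s x1"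
    using first_hitting_time[OF cont compact_Icc \<open>x \<in> {-L..L}\<close> _ \<open>penalised_density \<delta> K t x < c\<close>]
      \<open>t \<in> {0..<T}\<close> by (metis atLeastLessThan_iff)
  have "\<tau> \<in> {0<..<T}"
    using \<open>\<tau> \<in> {0<..t}\<close> \<open>t \<in> {0..<T}\<close> by simp
  have "0 \<le> 2 * \<gamma> * N 0 x powr \<gamma>"
    using gamma_pos by simp
  then have "0 \<le> K"
    using K[of 0 x] \<open>t \<in> {0..<T}\<close> \<open>x \<in> {-L..L}\<close> by simp
  then have "N \<tau> x1 > 0"
    using \<open>\<tau> \<in> {0<..<T}\<close> \<open>x1 \<in> {-L..L}\<close> \<open>\<delta> > 0\<close> \<open>penalised_density \<delta> K \<tau> x1 = c\<close> \<open>\<delta> * (L\<^sup>2 + K * T) < c\<close>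
    by (intro density_pos_if_penalised_density_gt[of \<delta> K]) auto
  moreover have "x1 \<in> {-L<..<L}"
    using penalised_density_min_interior[OF \<open>\<tau> \<in> {0<..<T}\<close> \<open>\<delta> > 0\<close> \<open>x1 \<in> {-L..L}\<close> x1_min] .
  ultimately obtain D where "D > 0" and dW: "((\<lambda>s. penalised_density \<delta> K s x1) has_real_derivative D) (at \<tau>)"
    using penalised_density_time_derivative_pos[OF K \<open>\<delta> > 0\<close> \<open>\<tau> \<in> {0<..<T}\<close> _ _ x1_min] by blast
  have "penalised_density \<delta> K \<tau> x1 \<le> penalised_density \<delta> K s x1" if "s \<in> {0..\<tau>}" for s
    using before[of s] that \<open>penalised_density \<delta> K \<tau> x1 = c\<close> by (cases "s = \<tau>") auto
  then have "D \<le> 0"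
    using \<open>\<tau> \<in> {0<..t}\<close>
    by (intro has_real_derivative_nonpos_at_right_min[OF has_field_derivative_at_within[OF dW]]) auto
  then show False
    using \<open>D > 0\<close> by simp
qed

lemma penalty_constant_exists:
  obtains K where "K > 0" "\<And>t x. t \<in> {0..T} \<Longrightarrow> x \<in> {-L..L} \<Longrightarrow> 2 * \<gamma> * N t x powr \<gamma> < K"
proof -
  have "compact ((\<lambda>(t, x). N t x) ` ({0..T} \<times> {-L..L}))"
    by (intro compact_continuous_image continuous compact_Times compact_Icc)
  then obtain B where "\<forall>z \<in> (\<lambda>(t, x). N t x) ` ({0..T} \<times> {-L..L}). norm z \<le> B"
    by (meson bounded_iff compact_imp_bounded)
  then have B: "N t x \<le> B" if "t \<in> {0..T}" "x \<in> {-L..L}" for t x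
    using that by force
  show ?thesis
  proof
    show "2 * \<gamma> * max B 0 powr \<gamma> + 1 > 0"
      using gamma_pos by (simp add: add_nonneg_pos)
    show "2 * \<gamma> * N t x powr \<gamma> < 2 * \<gamma> * max B 0 powr \<gamma> + 1"
      if "t \<in> {0..T}" "x \<in> {-L..L}" for t x
    proof -
      have "N t x powr \<gamma> \<le> max B 0 powr \<gamma>"
        using B[OF that] nonneg[OF that] gamma_pos by (intro powr_mono2) auto
      then have "2 * \<gamma> * N t x powr \<gamma> \<le> 2 * \<gamma> * max B 0 powr \<gamma>"
        using gamma_pos by simp
      then show ?thesis
        by linarith
    qed
  qed
qed

lemma density_lower_bound_before_end:
  assumes init: "\<And>y. y \<in> {-L..L} \<Longrightarrow> m \<le> N 0 y"
    and "t \<in> {0..<T}" "x \<in> {-L..L}"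
  shows "m \<le> exp (Rinf * t) * N t x"
proof (rule dense_le)
  fix c
  assume "c < m"
  show "c \<le> exp (Rinf * t) * N t x"
  proof (cases "c \<le> 0")
    case True
    then show ?thesis
      using nonneg[of t x] assms(2,3) by (simp add: order.trans[OF _ mult_nonneg_nonneg])
  next
    case False
    obtain K where "K > 0" and K: "\<And>t x. t \<in> {0..T} \<Longrightarrow> x \<in> {-L..L} \<Longrightarrow> 2 * \<gamma> * N t x powr \<gamma> < K"
      using penalty_constant_exists by blast
    define c' where "c' = (c + m) / 2"
    define \<delta> where "\<delta> = (c' - c) / (L\<^sup>2 + K * T)"
    have "L\<^sup>2 + K * T > 0"
      using \<open>K > 0\<close> \<open>t \<in> {0..<T}\<close> L_pos by (simp add: add_pos_nonneg)
    moreover have "c < c'" "c' < m"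
      using \<open>c < m\<close> by (simp_all add: c'_def)
    ultimately have "\<delta> > 0" "\<delta> * (L\<^sup>2 + K * T) = c' - c"
      by (simp_all add: \<delta>_def)
    then have "c' \<le> penalised_density \<delta> K t x"
      using \<open>c < c'\<close> \<open>c' < m\<close> False init assms(2,3)
      by (intro penalised_density_lower_bound[OF K]) (auto intro: less_le_trans)
    moreover have "\<delta> * (x\<^sup>2 + K * t) \<le> \<delta> * (L\<^sup>2 + K * T)"
      using \<open>\<delta> > 0\<close> \<open>K > 0\<close> assms(2,3) by (intro penalty_le) auto
    ultimately show ?thesis
      using \<open>\<delta> * (L\<^sup>2 + K * T) = c' - c\<close> unfolding penalised_density_def by linarith
  qed
qed

lemma density_lower_bound:
  assumes init: "\<And>y. y \<in> {-L..L} \<Longrightarrow> m \<le> N 0 y"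
    and "t \<in> {0<..T}" "x \<in> {-L..L}"
  shows "m * exp (- Rinf * t) \<le> N t x"
proof -
  have "continuous_on {0..T} (\<lambda>s. N s x)"
    using continuous_on_compose2[OF continuous, of "{0..T}" "\<lambda>s. (s, x)"] \<open>x \<in> {-L..L}\<close>
    by (auto simp: continuous_on_Pair image_subset_iff)
  then have "continuous_on (closure {0..<T}) (\<lambda>s. N s x - m * exp (- Rinf * s))"
    using \<open>t \<in> {0<..T}\<close> by (simp add: continuous_on_diff continuous_on_mult continuous_on_exp continuous_on_minus)
  moreover have "t \<in> closure {0..<T}"
    using \<open>t \<in> {0<..T}\<close> by simp
  moreover have "0 \<le> N s x - m * exp (- Rinf * s)" if "s \<in> {0..<T}" for s
  proof -
    have "m * exp (- Rinf * s) \<le> exp (Rinf * s) * N s x * exp (- Rinf * s)"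
      using density_lower_bound_before_end[OF init that \<open>x \<in> {-L..L}\<close>] by simp
    also have "\<dots> = N s x"
      by (simp add: exp_minus field_simps)
    finally show ?thesis
      by simp
  qed
  ultimately have "0 \<le> N t x - m * exp (- Rinf * t)"
    by (rule continuous_ge_on_closure)
  then show ?thesis
    by simp
qed

end

section \<open>The total density of the regularised system\<close>

lemma AE_abs_le_imp_abs_le_at_isCont:
  fixes f :: "'a::euclidean_space \<Rightarrow> real"
  assumes ae: "AE z in lborel. z \<in> U \<longrightarrow> \<bar>f z\<bar> \<le> c"
    and "open U" "z0 \<in> U" and cont: "isCont f z0"
  shows "\<bar>f z0\<bar> \<le> c"
proof (rule ccontr)
  assume "\<not> \<bar>f z0\<bar> \<le> c"
  then have "\<forall>\<^sub>F z in at z0. c < \<bar>f z\<bar>"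
    using cont unfolding isCont_def by (intro order_tendstoD(1)) (auto intro: tendsto_rabs)
  moreover have "\<forall>\<^sub>F z in at z0. z \<in> U"
    using \<open>open U\<close> \<open>z0 \<in> U\<close> by (rule eventually_at_in_open')
  ultimately have "\<forall>\<^sub>F z in at z0. c < \<bar>f z\<bar> \<and> z \<in> U"
    by (rule eventually_conj)
  then obtain e where "e > 0" and e: "\<And>z. z \<in> ball z0 e \<Longrightarrow> z \<noteq> z0 \<Longrightarrow> c < \<bar>f z\<bar> \<and> z \<in> U"
    unfolding eventually_at by (auto simp: dist_commute)
  obtain N where "N \<in> null_sets lborel" and N: "{z. \<not> (z \<in> U \<longrightarrow> \<bar>f z\<bar> \<le> c)} \<subseteq> N"
    using ae unfolding eventually_ae_filter by auto
  have "ball z0 e \<subseteq> N \<union> {z0}"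
    using e N by force
  moreover have "N \<union> {z0} \<in> null_sets lborel"
    using \<open>N \<in> null_sets lborel\<close> finite_imp_null_set_lborel[of "{z0}"] by (intro null_sets.Un) auto
  ultimately have "ball z0 e \<in> null_sets lborel"
    by (auto intro: null_sets_subset)
  then have "emeasure lborel (ball z0 e) = 0"
    by auto
  then show False
    using \<open>e > 0\<close> unit_ball_vol_pos[of "DIM('a)"] by (simp add: emeasure_ball)
qed

lemma feasible_growth_isCont:
  assumes "feasible_growth F1 F2 G1 G2" "p > 0"
  shows "isCont F1 p" "isCont F2 p" "isCont G1 p" "isCont G2 p"
proof -
  have "isCont f p" if "C1_bdd_deriv f f'" for f f'
  proof -
    have "\<forall>q\<ge>0. (f has_real_derivative f' q) (at q within {0..})"
      using that unfolding C1_bdd_deriv_def by (rule conjunct1)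
    then have "(f has_real_derivative f' p) (at p within {0..})"
      using less_imp_le[OF \<open>p > 0\<close>] by blast
    then have "(f has_real_derivative f' p) (at p)"
      using \<open>p > 0\<close> at_within_interior[of p "{0..}"] by simp
    then show ?thesis
      by (rule DERIV_isCont)
  qed
  moreover obtain F1' F2' G1' G2' where
    "C1_bdd_deriv F1 F1'" "C1_bdd_deriv F2 F2'" "C1_bdd_deriv G1 G1'" "C1_bdd_deriv G2 G2'"
    using assms(1) unfolding feasible_growth_def by (elim conjE exE) simp
  ultimately show "isCont F1 p" "isCont F2 p" "isCont G1 p" "isCont G2 p"
    by simp_all
qed

lemma tot_density_mult_growth_R:
  fixes \<gamma> :: real
  assumes "n1 t x \<ge> 0" "n2 t x \<ge> 0"
  defines "P \<equiv> pressure \<gamma> n1 n2 t x"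
  shows "tot_density n1 n2 t x * growth_R \<gamma> F1 F2 G1 G2 n1 n2 t x
    = n1 t x * (F1 P + F2 P) + n2 t x * (G1 P + G2 P)"
proof (cases "tot_density n1 n2 t x = 0")
  case True
  then have "n1 t x = 0" "n2 t x = 0"
    using assms by (simp_all add: tot_density_def)
  then show ?thesis
    using True by simp
next
  case False
  then show ?thesis
    unfolding growth_R_def Let_def P_def by (simp add: field_simps)
qed

lemma growth_R_lower_bound:
  assumes "feasible_growth F1 F2 G1 G2"
    and sol: "regularised_solution \<gamma> \<epsilon> L T F1 F2 G1 G2 ni1 ni2 n1 n2"
    and ae: "AE z in lborel. z \<in> {0<..<T} \<times> {-L<..<L} \<longrightarrow>
      \<bar>growth_R \<gamma> F1 F2 G1 G2 n1 n2 (fst z) (snd z)\<bar> \<le> Rinf"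
    and "t \<in> {0<..<T}" "x \<in> {-L<..<L}" "tot_density n1 n2 t x > 0"
  shows "- Rinf \<le> growth_R \<gamma> F1 F2 G1 G2 n1 n2 t x"
proof -
  define z where "z = (t, x)"
  define N where "N z = tot_density n1 n2 (fst z) (snd z)" for z
  have "z \<in> interior ({0..T} \<times> {-L..L})"
    using \<open>t \<in> {0<..<T}\<close> \<open>x \<in> {-L<..<L}\<close> by (simp add: z_def interior_Times)
  then have "isCont (\<lambda>z. n1 (fst z) (snd z)) z" "isCont (\<lambda>z. n2 (fst z) (snd z)) z"
    using sol unfolding regularised_solution_def Let_def case_prod_unfold
    by (auto intro: continuous_on_interior)
  then have "isCont N z"
    unfolding N_def tot_density_def by (intro continuous_intros)
  moreover have "N z > 0"
    using \<open>tot_density n1 n2 t x > 0\<close> by (simp add: N_def z_def)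
  ultimately have "isCont (\<lambda>z. N z powr \<gamma>) z" "N z powr \<gamma> > 0"
    by (auto intro: continuous_at_within_powr)
  then have "isCont (\<lambda>z. f (N z powr \<gamma>)) z" if "f \<in> {F1, F2, G1, G2}" for f
    using feasible_growth_isCont[OF \<open>feasible_growth F1 F2 G1 G2\<close>] that
    by (auto intro: isCont_o2)
  then have "isCont (\<lambda>z. growth_R \<gamma> F1 F2 G1 G2 n1 n2 (fst z) (snd z)) z"
    using \<open>isCont N z\<close> \<open>N z > 0\<close> \<open>isCont (\<lambda>z. n1 (fst z) (snd z)) z\<close> \<open>isCont (\<lambda>z. n2 (fst z) (snd z)) z\<close>
    unfolding growth_R_def Let_def pressure_def N_def[symmetric]
    by (intro continuous_intros) auto
  then have "\<bar>growth_R \<gamma> F1 F2 G1 G2 n1 n2 t x\<bar> \<le> Rinf"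
    using AE_abs_le_imp_abs_le_at_isCont[OF ae] \<open>t \<in> {0<..<T}\<close> \<open>x \<in> {-L<..<L}\<close>
    by (auto simp: z_def open_Times)
  then show ?thesis
    by simp
qed

lemma regularised_solution_total_density_equation:
  assumes sol: "regularised_solution \<gamma> \<epsilon> L T F1 F2 G1 G2 ni1 ni2 n1 n2"
    and "t \<in> {0<..<T}" "x \<in> {-L<..<L}"
  defines "N \<equiv> tot_density n1 n2"
  shows "\<exists>d. ((\<lambda>y. N t y * deriv (\<lambda>z. N t z powr \<gamma>) y) has_real_derivative d) (at x) \<and>
    ((\<lambda>s. N s x) has_real_derivative d + N t x * growth_R \<gamma> F1 F2 G1 G2 n1 n2 t x) (at t)"
proof -
  obtain d1 d2 where
    flux1: "((\<lambda>y. n1 t y * deriv (\<lambda>z. N t z powr \<gamma>) y) has_real_derivative d1) (at x)"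
    and flux2: "((\<lambda>y. n2 t y * deriv (\<lambda>z. N t z powr \<gamma>) y) has_real_derivative d2) (at x)"
    and time1: "((\<lambda>s. n1 s x) has_real_derivative
      d1 + n1 t x * F1 (N t x powr \<gamma>) + n2 t x * G1 (N t x powr \<gamma>)) (at t)"
    and time2: "((\<lambda>s. n2 s x) has_real_derivative
      d2 + n1 t x * F2 (N t x powr \<gamma>) + n2 t x * G2 (N t x powr \<gamma>)) (at t)"
    using sol \<open>t \<in> {0<..<T}\<close> \<open>x \<in> {-L<..<L}\<close>
    unfolding regularised_solution_def Let_def pressure_def N_def by blast
  have "n1 t x \<ge> 0" "n2 t x \<ge> 0"
    using sol \<open>t \<in> {0<..<T}\<close> \<open>x \<in> {-L<..<L}\<close> unfolding regularised_solution_def Let_def by auto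
  then have "N t x * growth_R \<gamma> F1 F2 G1 G2 n1 n2 t x
      = n1 t x * (F1 (N t x powr \<gamma>) + F2 (N t x powr \<gamma>))
        + n2 t x * (G1 (N t x powr \<gamma>) + G2 (N t x powr \<gamma>))"
    unfolding N_def using tot_density_mult_growth_R by (simp add: pressure_def)
  moreover have "((\<lambda>y. N t y * deriv (\<lambda>z. N t z powr \<gamma>) y) has_real_derivative d1 + d2) (at x)"
    using DERIV_add[OF flux1 flux2] by (simp add: N_def tot_density_def distrib_right)
  moreover have "((\<lambda>s. N s x) has_real_derivative d1 + d2
      + (n1 t x * (F1 (N t x powr \<gamma>) + F2 (N t x powr \<gamma>))
        + n2 t x * (G1 (N t x powr \<gamma>) + G2 (N t x powr \<gamma>)))) (at t)"
    using DERIV_add[OF time1 time2] by (simp add: N_def tot_density_def algebra_simps)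
  ultimately show ?thesis
    by auto
qed

lemma regularised_solution_neumann_porous_medium:
  assumes "\<gamma> > 0" "L > 0" "feasible_growth F1 F2 G1 G2"
    and sol: "regularised_solution \<gamma> \<epsilon> L T F1 F2 G1 G2 ni1 ni2 n1 n2"
    and ae: "AE z in lborel. z \<in> {0<..<T} \<times> {-L<..<L} \<longrightarrow>
      \<bar>growth_R \<gamma> F1 F2 G1 G2 n1 n2 (fst z) (snd z)\<bar> \<le> Rinf"
  shows "neumann_porous_medium \<gamma> L T Rinf (tot_density n1 n2) (growth_R \<gamma> F1 F2 G1 G2 n1 n2)"
proof (unfold_locales)
  let ?N = "tot_density n1 n2"
  have nonneg: "\<And>t x. t \<in> {0..T} \<Longrightarrow> x \<in> {-L..L} \<Longrightarrow> n1 t x \<ge> 0 \<and> n2 t x \<ge> 0"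
    and cont1: "continuous_on ({0..T} \<times> {-L..L}) (\<lambda>(t, x). n1 t x)"
    and cont2: "continuous_on ({0..T} \<times> {-L..L}) (\<lambda>(t, x). n2 t x)"
    and diff: "\<And>t x. t \<in> {0<..<T} \<Longrightarrow> x \<in> {-L..L} \<Longrightarrow>
        n1 t differentiable (at x within {-L..L}) \<and> n2 t differentiable (at x within {-L..L})"
    and neumann: "\<And>t. t \<in> {0<..<T} \<Longrightarrow>
        (?N t has_real_derivative 0) (at L within {-L..L}) \<and>
        (?N t has_real_derivative 0) (at (-L) within {-L..L})"
    using sol unfolding regularised_solution_def Let_def by blast+
  show "\<gamma> > 0" "L > 0"
    by fact+
  show "continuous_on ({0..T} \<times> {-L..L}) (\<lambda>(t, x). ?N t x)"
    using continuous_on_add[OF cont1 cont2] by (simp add: tot_density_def case_prod_unfold)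
  show "?N t x \<ge> 0" if "t \<in> {0..T}" "x \<in> {-L..L}" for t x
    using nonneg[OF that] by (simp add: tot_density_def)
  show "(?N t has_real_derivative 0) (at L within {-L..L}) \<and>
      (?N t has_real_derivative 0) (at (-L) within {-L..L})" if "t \<in> {0<..<T}" for t
    using neumann[OF that] .
  show "?N t differentiable (at x)" if "t \<in> {0<..<T}" "x \<in> {-L<..<L}" for t x
  proof -
    have "at x within {-L..L} = at x"
      using that by (intro at_within_interior) simp
    then have "n1 t differentiable (at x)" "n2 t differentiable (at x)"
      using diff[of t x] that by auto
    then show ?thesis
      unfolding tot_density_def[abs_def] by (intro differentiable_add) simp_all
  qed
  show "\<exists>d. ((\<lambda>y. ?N t y * deriv (\<lambda>z. ?N t z powr \<gamma>) y) has_real_derivative d) (at x) \<and>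
      ((\<lambda>s. ?N s x) has_real_derivative d + ?N t x * growth_R \<gamma> F1 F2 G1 G2 n1 n2 t x) (at t)"
    if "t \<in> {0<..<T}" "x \<in> {-L<..<L}" for t x
    using regularised_solution_total_density_equation[OF sol that] .
  show "- Rinf \<le> growth_R \<gamma> F1 F2 G1 G2 n1 n2 t x"
    if "t \<in> {0<..<T}" "x \<in> {-L<..<L}" "?N t x > 0" for t x
    using growth_R_lower_bound[OF \<open>feasible_growth F1 F2 G1 G2\<close> sol ae that] .
qed

theorem proposition2p5:
  fixes \<gamma> \<epsilon> L T Rinf :: real
    and F1 F2 G1 G2 ni1 ni2 :: "real \<Rightarrow> real"
    and n1 n2 :: "real \<Rightarrow> real \<Rightarrow> real"
  assumes "\<gamma> > 1" and "\<epsilon> > 0" and "L > 0" and "T > 0"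
    and "feasible_growth F1 F2 G1 G2"
    and "\<forall>x. ni1 x \<ge> 0" and "\<forall>x. ni2 x \<ge> 0"
    and "\<forall>x. x \<notin> {-L<..<L} \<longrightarrow> ni1 x = 0 \<and> ni2 x = 0"
    and "regularised_solution \<gamma> \<epsilon> L T F1 F2 G1 G2 ni1 ni2 n1 n2"
    and "Rinf > 0"
    and "AE z in lborel. z \<in> {0<..<T} \<times> {-L<..<L} \<longrightarrow>
           \<bar>growth_R \<gamma> F1 F2 G1 G2 n1 n2 (fst z) (snd z)\<bar> \<le> Rinf"
  shows "\<forall>t\<in>{0<..T}. \<forall>x\<in>{-L<..<L}.
           tot_density n1 n2 t x \<ge> 2 * \<epsilon> * exp (- Rinf * t) \<and> 2 * \<epsilon> * exp (- Rinf * t) > 0"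
proof -
  interpret neumann_porous_medium \<gamma> L T Rinf "tot_density n1 n2" "growth_R \<gamma> F1 F2 G1 G2 n1 n2"
    using regularised_solution_neumann_porous_medium assms(1,3,5,9,11) by simp
  have "2 * \<epsilon> \<le> tot_density n1 n2 0 x" if "x \<in> {-L..L}" for x
    using assms(6,7,9) that unfolding regularised_solution_def Let_def tot_density_def by auto
  then show ?thesis
    using density_lower_bound \<open>\<epsilon> > 0\<close> by auto
qed

end
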